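(* Let $\mu\ge 0$ be an integer and let $\mathcal{F}$ be a $(2\mu+1)$-uniform weak $\Delta$-system. (i) If the intersection size of $\mathcal{F}$ is $\mu+1$ and $|\mathcal{F}|\ge \mu^2+\mu+3$, then $\mathcal{F}$ is a strong $\Delta$-system. (ii) If the intersection size of $\mathcal{F}$ is $\mu$ and $|\mathcal{F}|\ge(\mu+1)^2+\mu+3$, then $\mathcal{F}$ is a strong $\Delta$-system.
   Context: A family $\mathcal{F}=\{S_1,\dots,S_m\}$ of (distinct) finite sets is $h$-uniform if $|S|=h$ for every $S\in\mathcal{F}$. It is a weak $\Delta$-system if there is an integer $\lambda$ (its intersection size) with $|S_i\cap S_j|=\lambda$ for all distinct $S_i,S_j\in\mathcal{F}$. It is a strong $\Delta$-system (sunflower) if there is a set $C$ (the core) with $S_i\cap S_j=C$ for all distinct $S_i,S_j\in\mathcal{F}$. *)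

theory Defs
  imports Main
begin

definition uniform_family :: "nat \<Rightarrow> 'a set set \<Rightarrow> bool" where
  "uniform_family h F \<longleftrightarrow> (\<forall>S\<in>F. finite S \<and> card S = h)"

definition weak_delta_system :: "nat \<Rightarrow> 'a set set \<Rightarrow> bool" where
  "weak_delta_system lam F \<longleftrightarrow>
     (\<forall>S\<in>F. \<forall>T\<in>F. S \<noteq> T \<longrightarrow> card (S \<inter> T) = lam)"

definition strong_delta_system :: "'a set set \<Rightarrow> bool" where
  "strong_delta_system F \<longleftrightarrow>
     (\<exists>C. \<forall>S\<in>F. \<forall>T\<in>F. S \<noteq> T \<longrightarrow> S \<inter> T = C)"

end

theory Submission
  imports Defs
begin

(*
  Let F be a k-uniform weak Delta-system with intersection size lam, m = |F| and t = k - lam.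
  A variance argument (comparing the members through a point x with the others) shows that
  every point lies in at most t + 1 or in at least m - t - 1 members of F. Replacing each member B
  by its symmetric difference N B with the set H of heavily covered points gives sets that are
  pairwise at distance 2t and cover every point at most t + 1 times. For the excesses
  e B = |N B| - t this means 2 |N B \<inter> N C| = e B + e C, and double counting the points of N B gives
  (m - 2 - 2t) e B + (sum of all e) <= 2t^2. For large m this forces every excess to vanish, so the
  N B are pairwise disjoint, which makes F a sunflower with core H; the only exception
  (m = t^2 + t + 2, one excess -1, all others 1) is excluded by counting the points of H once
  more, using k = 2t - 1.
*)

lemma sum_card_Int_eq_sum_card_mem:
  assumes "finite I" "finite X"
  shows "(\<Sum>i\<in>I. card (S i \<inter> X)) = (\<Sum>y\<in>X. card {i\<in>I. y \<in> S i})"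
proof -
  have "(\<Sum>i\<in>I. card (S i \<inter> X)) = (\<Sum>i\<in>I. \<Sum>y\<in>X. of_bool (y \<in> S i))"
    using assms(2) by (simp add: Int_commute Int_def)
  also have "\<dots> = (\<Sum>y\<in>X. \<Sum>i\<in>I. of_bool (y \<in> S i))"
    by (rule sum.swap)
  finally show ?thesis
    using assms(1) by (simp add: Int_def)
qed

lemma card_add_card_eq_card_sym_diff:
  assumes "finite A" "finite B"
  shows "card A + card B = card (sym_diff A B) + 2 * card (A \<inter> B)"
proof -
  have "card (sym_diff A B) = card (A - B) + card (B - A)"
    using assms by (intro card_Un_disjoint) auto
  moreover have "card A = card (A \<inter> B) + card (A - B)" "card B = card (A \<inter> B) + card (B - A)"
    using assms card_Int_Diff by (metis Int_commute)+
  ultimately show ?thesis by simp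
qed

lemma le_or_le_if_mult_less:
  fixes c d t :: nat
  assumes "(t + 2)\<^sup>2 \<le> 2 * (c + d)" and "c * d < t * (c + d)"
  shows "c \<le> t + 1 \<or> d \<le> t + 1"
proof (rule ccontr)
  assume "\<not> ?thesis"
  then obtain c' d' where "c = t + 2 + c'" "d = t + 2 + d'"
    by (metis add.commute le_Suc_ex not_less_eq_eq Suc_eq_plus1 add_2_eq_Suc)
  then have "(t + 2) * (c + d) \<le> c * d + (t + 2)\<^sup>2"
    by (simp add: power2_eq_square algebra_simps)
  with assms show False
    by (simp add: algebra_simps)
qed

lemma square_less_sum_squares_if_sum_eq_0:
  fixes f :: "'a \<Rightarrow> 'b :: linordered_idom"
  assumes "finite X" "x \<in> X" "(\<Sum>y\<in>X. f y) = 0" "f x \<noteq> 0"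
  shows "(f x)\<^sup>2 < (\<Sum>y\<in>X. (f y)\<^sup>2)"
proof -
  have "(\<Sum>y\<in>X - {x}. f y) \<noteq> 0"
    using sum.remove[OF assms(1,2), of f] assms(3,4) by simp
  then obtain y where "y \<in> X - {x}" "f y \<noteq> 0"
    by (meson sum.neutral)
  then have "0 < (\<Sum>y\<in>X - {x}. (f y)\<^sup>2)"
    using assms(1) by (intro sum_pos2) auto
  then show ?thesis
    using sum.remove[OF assms(1,2), of "\<lambda>y. (f y)\<^sup>2"] by simp
qed

definition degree :: "'a set set \<Rightarrow> 'a \<Rightarrow> nat" where
  "degree P y = card {B\<in>P. y \<in> B}"

lemma sum_degree_mult_degree_eq_sum_card_Int:
  assumes "finite P" "finite Q" "finite X" "\<Union>P \<subseteq> X"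
  shows "(\<Sum>y\<in>X. degree P y * degree Q y) = (\<Sum>B\<in>P. \<Sum>C\<in>Q. card (C \<inter> B))"
proof -
  have "(\<Sum>y\<in>X. degree P y * degree Q y) = (\<Sum>y\<in>X. \<Sum>B\<in>P. of_bool (y \<in> B) * degree Q y)"
    using assms(1) by (simp add: degree_def Int_def)
  also have "\<dots> = (\<Sum>B\<in>P. \<Sum>y\<in>X. of_bool (y \<in> B) * degree Q y)"
    by (rule sum.swap)
  also have "\<dots> = (\<Sum>B\<in>P. \<Sum>y\<in>B. degree Q y)"
  proof (rule sum.cong[OF refl])
    fix B
    assume "B \<in> P"
    then have "X \<inter> B = B"
      using assms(4) by blast
    then show "(\<Sum>y\<in>X. of_bool (y \<in> B) * degree Q y) = (\<Sum>y\<in>B. degree Q y)"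
      using assms(3) by simp
  qed
  also have "\<dots> = (\<Sum>B\<in>P. \<Sum>C\<in>Q. card (C \<inter> B))"
  proof (rule sum.cong[OF refl])
    fix B
    assume "B \<in> P"
    then have "B \<subseteq> X"
      using assms(4) by blast
    then have "finite B"
      using assms(3) by (rule finite_subset)
    then show "(\<Sum>y\<in>B. degree Q y) = (\<Sum>C\<in>Q. card (C \<inter> B))"
      unfolding degree_def using sum_card_Int_eq_sum_card_mem[OF assms(2), of B "\<lambda>C. C"] by simp
  qed
  finally show ?thesis .
qed

locale equidistant_family =
  fixes I :: "'i set" and N :: "'i \<Rightarrow> 'a set" and t :: nat
  assumes finite_index: "finite I"
    and finite_sets: "i \<in> I \<Longrightarrow> finite (N i)"
    and card_sym_diff: "\<lbrakk>i \<in> I; j \<in> I; i \<noteq> j\<rbrakk> \<Longrightarrow> card (sym_diff (N i) (N j)) = 2 * t"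
    and card_containing_le: "card {i\<in>I. y \<in> N i} \<le> t + 1"
begin

definition excess :: "'i \<Rightarrow> int" where
  "excess i = int (card (N i)) - int t"

lemma excess_add:
  assumes "i \<in> I" "j \<in> I" "i \<noteq> j"
  shows "excess i + excess j = 2 * int (card (N i \<inter> N j))"
  using card_add_card_eq_card_sym_diff[OF finite_sets[OF assms(1)] finite_sets[OF assms(2)]]
    card_sym_diff[OF assms] unfolding excess_def by linarith

lemma excess_add_nonneg:
  assumes "i \<in> I" "j \<in> I" "i \<noteq> j"
  shows "0 \<le> excess i + excess j"
  using excess_add[OF assms] by simp

lemma disjoint_if_excess_add_eq_0:
  assumes "i \<in> I" "j \<in> I" "i \<noteq> j" "excess i + excess j = 0"
  shows "N i \<inter> N j = {}"
  using excess_add[OF assms(1-3)] assms(4) finite_sets[OF assms(1)] by simp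

lemma excess_bound:
  assumes "i \<in> I"
  shows "(int (card I) - 2 - 2 * int t) * excess i + (\<Sum>j\<in>I. excess j) \<le> 2 * int t ^ 2"
proof -
  have "(\<Sum>j\<in>I. card (N j \<inter> N i)) = (\<Sum>y\<in>N i. card {j\<in>I. y \<in> N j})"
    by (rule sum_card_Int_eq_sum_card_mem[OF finite_index finite_sets[OF assms]])
  also have "\<dots> \<le> (\<Sum>y\<in>N i. t + 1)"
    by (intro sum_mono card_containing_le)
  finally have "(\<Sum>j\<in>I - {i}. card (N j \<inter> N i)) \<le> t * card (N i)"
    using sum.remove[OF finite_index assms, of "\<lambda>j. card (N j \<inter> N i)"] by (simp add: mult.commute)
  then have le: "int (\<Sum>j\<in>I - {i}. card (N j \<inter> N i)) \<le> int t * (excess i + int t)"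
    unfolding excess_def by (simp del: of_nat_sum) (metis of_nat_le_iff of_nat_mult)
  have "0 < card I"
    using assms finite_index card_gt_0_iff by blast
  have "2 * int (\<Sum>j\<in>I - {i}. card (N j \<inter> N i)) = (\<Sum>j\<in>I - {i}. excess i + excess j)"
    unfolding of_nat_sum sum_distrib_left
    by (rule sum.cong) (use assms excess_add in \<open>auto simp: Int_commute\<close>)
  also have "\<dots> = (int (card I) - 1) * excess i + ((\<Sum>j\<in>I. excess j) - excess i)"
    using assms finite_index \<open>0 < card I\<close>
    by (simp add: sum.distrib sum_diff1 of_nat_diff algebra_simps)
  finally show ?thesis
    using le by (simp add: algebra_simps power2_eq_square)
qed

lemma ex_excess_nonpos:
  assumes "t^2 + t + 2 \<le> card I"
  shows "\<exists>i\<in>I. excess i \<le> 0"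
proof (rule ccontr)
  assume "\<not> ?thesis"
  then have pos: "1 \<le> excess i" if "i \<in> I" for i
    using that by fastforce
  have "int (t^2 + t + 2) \<le> int (card I)"
    using assms by (simp only: of_nat_le_iff)
  then have m: "int t ^ 2 + int t + 2 \<le> int (card I)"
    by simp
  have "2 * t + 2 \<le> card I"
    using assms le_square[of t] unfolding power2_eq_square by linarith
  then have s: "0 \<le> int (card I) - 2 - 2 * int t"
    by linarith
  obtain i where i: "i \<in> I"
    using assms finite_index by fastforce
  have "(\<Sum>j\<in>I. 1) \<le> (\<Sum>j\<in>I. excess j)"
    by (intro sum_mono pos)
  moreover have "int (card I) - 2 - 2 * int t \<le> (int (card I) - 2 - 2 * int t) * excess i"
    using mult_left_mono[OF pos[OF i] s] by simp
  ultimately show False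
    using excess_bound[OF i] m by simp
qed

lemma sum_excess_ge_if_excess_neg:
  assumes "i0 \<in> I" "excess i0 < 0"
  shows "(int (card I) - 2) * - excess i0 \<le> (\<Sum>j\<in>I. excess j)"
proof -
  have "0 < card I"
    using assms(1) finite_index card_gt_0_iff by blast
  then have "(\<Sum>j\<in>I - {i0}. - excess i0) = (int (card I) - 1) * - excess i0"
    using assms(1) finite_index by (simp add: of_nat_diff)
  moreover have "- excess i0 \<le> excess j" if "j \<in> I - {i0}" for j
    using excess_add_nonneg[of i0 j] that assms(1) by auto
  then have "(\<Sum>j\<in>I - {i0}. - excess i0) \<le> (\<Sum>j\<in>I - {i0}. excess j)"
    by (rule sum_mono)
  ultimately show ?thesis
    using sum.remove[OF finite_index assms(1), of excess] unfolding left_diff_distrib by linarith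
qed

lemma tight_if_excess_neg:
  assumes "t^2 + t + 2 \<le> card I" and "t^2 + 3 * t + 4 < 2 * card I"
    and "i0 \<in> I" and "excess i0 < 0"
  shows "card I = t^2 + t + 2 \<and> excess i0 = -1"
proof -
  define m n where "m = int (card I)" and "n = - excess i0"
  have "int (t^2 + t + 2) \<le> int (card I)" "int (t^2 + 3 * t + 4) < int (2 * card I)"
    using assms(1,2) by (simp_all only: of_nat_le_iff of_nat_less_iff)
  then have m: "int t ^ 2 + int t + 2 \<le> m" "int t ^ 2 + 3 * int t + 4 < 2 * m"
    unfolding m_def by simp_all
  have "2 * t + 2 \<le> card I"
    using assms(1) le_square[of t] unfolding power2_eq_square by linarith
  then have s: "0 \<le> m - 2 - 2 * int t" "0 \<le> 2 * m - 4 - 2 * int t"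
    unfolding m_def by linarith+
  have "0 < card (I - {i0})"
    using assms(1,3) finite_index by (simp add: card_Diff_singleton)
  then obtain j where j: "j \<in> I" "j \<noteq> i0"
    by (auto simp: card_gt_0_iff)
  have "n \<le> excess j"
    using excess_add_nonneg[OF assms(3) j(1) j(2)[symmetric]] unfolding n_def by simp
  then have "(m - 2 - 2 * int t) * n \<le> (m - 2 - 2 * int t) * excess j"
    using s(1) by (rule mult_left_mono)
  moreover have "(m - 2 - 2 * int t) * excess j + (m - 2) * n \<le> 2 * int t ^ 2"
    using excess_bound[OF j(1)] sum_excess_ge_if_excess_neg[OF assms(3,4)] unfolding m_def n_def by simp
  ultimately have key: "(2 * m - 4 - 2 * int t) * n \<le> 2 * int t ^ 2"
    by (simp add: algebra_simps)
  have n: "1 \<le> n"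
    using assms(4) unfolding n_def by simp
  have "2 * m - 4 - 2 * int t \<le> 2 * int t ^ 2"
    using mult_left_mono[OF n s(2)] key by simp
  then have m_eq: "m = int t ^ 2 + int t + 2"
    using m by linarith
  then have "2 * int t ^ 2 * n \<le> 2 * int t ^ 2 * 1"
    using key by (simp add: algebra_simps)
  moreover have "0 < 2 * int t ^ 2"
    using m m_eq by linarith
  ultimately have "n = 1"
    using n by (simp add: mult_le_cancel_left_pos)
  moreover have "int (card I) = int (t^2 + t + 2)"
    using m_eq unfolding m_def by simp
  ultimately show ?thesis
    unfolding n_def of_nat_eq_iff by simp
qed

lemma excess_eq_1_if_tight:
  assumes "card I = t^2 + t + 2" and "t^2 + 3 * t + 4 < 2 * card I"
    and "i0 \<in> I" and "excess i0 = -1" and "j \<in> I" and "j \<noteq> i0"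
  shows "excess j = 1"
proof -
  have m: "int (card I) = int t ^ 2 + int t + 2"
    using assms(1) by simp
  have "int (t^2 + 3 * t + 4) < int (2 * card I)"
    using assms(2) by (simp only: of_nat_less_iff)
  then have t: "0 < int t ^ 2 - int t"
    using m by simp
  have "1 \<le> excess j"
    using excess_add_nonneg[OF assms(3,5) assms(6)[symmetric]] assms(4) by simp
  have "int t ^ 2 + int t \<le> (\<Sum>i\<in>I. excess i)"
    using sum_excess_ge_if_excess_neg[OF assms(3)] assms(4) m by simp
  moreover have "(int t ^ 2 - int t) * excess j + (\<Sum>i\<in>I. excess i) \<le> 2 * int t ^ 2"
    using excess_bound[OF assms(5)] m by (simp add: algebra_simps)
  ultimately have "(int t ^ 2 - int t) * excess j \<le> (int t ^ 2 - int t) * 1"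
    by simp
  then show ?thesis
    using \<open>1 \<le> excess j\<close> t by (simp add: mult_le_cancel_left_pos)
qed

lemma card_excess_eq_0_mult_le:
  assumes "j \<in> I" and "excess j \<noteq> 0"
  shows "int (card {i\<in>I. excess i = 0}) * excess j \<le> 2 * int (card (N j))"
proof -
  define Z where "Z = {i\<in>I. excess i = 0}"
  have Z: "finite Z" "Z \<subseteq> I" "j \<notin> Z"
    using finite_index assms(2) unfolding Z_def by auto
  have "(\<Sum>L\<in>Z. excess L) = 0"
    unfolding Z_def by (intro sum.neutral) simp
  then have "int (card Z) * excess j = (\<Sum>L\<in>Z. excess j + excess L)"
    by (simp add: sum.distrib)
  also have "\<dots> = (\<Sum>L\<in>Z. 2 * int (card (N j \<inter> N L)))"
    using Z excess_add[OF assms(1)] by (intro sum.cong) auto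
  also have "\<dots> = 2 * int (card (\<Union>L\<in>Z. N j \<inter> N L))"
  proof -
    have "N L \<inter> N L' = {}" if "L \<in> Z" "L' \<in> Z" "L \<noteq> L'" for L L'
      using disjoint_if_excess_add_eq_0[of L L'] that unfolding Z_def by simp
    then have "card (\<Union>L\<in>Z. N j \<inter> N L) = (\<Sum>L\<in>Z. card (N j \<inter> N L))"
      using Z finite_sets[OF assms(1)] by (intro card_UN_disjoint) blast+
    then show ?thesis
      by (simp add: sum_distrib_left)
  qed
  also have "\<dots> \<le> 2 * int (card (N j))"
    using finite_sets[OF assms(1)] by (simp add: card_mono)
  finally show ?thesis
    unfolding Z_def .
qed

lemma two_le_excess_if_excess_eq_0:
  assumes "i0 \<in> I" "excess i0 = 0" "i \<in> I" "excess i \<noteq> 0"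
  shows "2 \<le> excess i"
proof -
  have "excess i = 2 * int (card (N i \<inter> N i0))"
    using excess_add[of i i0] assms by auto
  moreover from this have "1 \<le> card (N i \<inter> N i0)"
    using assms(4) by auto
  ultimately show ?thesis
    by linarith
qed

lemma card_excess_eq_0_le:
  assumes "i0 \<in> I" "excess i0 = 0" "j \<in> I" "excess j \<noteq> 0"
  shows "card {i\<in>I. excess i = 0} \<le> t + 2"
proof (rule ccontr)
  define z where "z = int (card {i\<in>I. excess i = 0})"
  assume "\<not> card {i\<in>I. excess i = 0} \<le> t + 2"
  then have large: "int t + 2 < z"
    unfolding z_def by linarith
  then have "(z - 2) * 2 \<le> (z - 2) * excess j"
    using two_le_excess_if_excess_eq_0[OF assms] by (intro mult_left_mono) auto
  then have "2 * z - 4 \<le> z * excess j - 2 * excess j"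
    by (simp add: algebra_simps)
  moreover have "z * excess j \<le> 2 * int t + 2 * excess j"
    using card_excess_eq_0_mult_le[OF assms(3,4)] unfolding z_def excess_def by simp
  ultimately show False
    using large by linarith
qed

lemma all_excess_eq_0_if_excess_eq_0:
  assumes "t^2 + t + 2 \<le> card I" and "t^2 + 3 * t + 4 < 2 * card I"
    and "i0 \<in> I" and "excess i0 = 0"
  shows "\<forall>i\<in>I. excess i = 0"
proof (rule ccontr)
  define m Z where "m = int (card I)" and "Z = {i\<in>I. excess i = 0}"
  have "int (t^2 + 3 * t + 4) < int (2 * card I)"
    using assms(2) by (simp only: of_nat_less_iff)
  then have m: "int t ^ 2 + 3 * int t + 4 < 2 * m"
    unfolding m_def by simp
  have "2 * t + 2 \<le> card I"
    using assms(1) le_square[of t] unfolding power2_eq_square by linarith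
  then have s: "0 \<le> m - 2 - 2 * int t"
    unfolding m_def by linarith
  have Z: "finite Z" "Z \<subseteq> I"
    using finite_index unfolding Z_def by auto
  have ge_2: "2 \<le> excess i" if "i \<in> I - Z" for i
    using two_le_excess_if_excess_eq_0[OF assms(3,4)] that unfolding Z_def by simp
  assume "\<not> ?thesis"
  then obtain j where j: "j \<in> I - Z"
    unfolding Z_def by auto
  have "(\<Sum>i\<in>I - Z. 2) \<le> (\<Sum>i\<in>I - Z. excess i)"
    by (intro sum_mono ge_2)
  moreover have "(\<Sum>i\<in>I. excess i) = (\<Sum>i\<in>I - Z. excess i)"
    using Z finite_index by (intro sum.mono_neutral_right) (auto simp: Z_def)
  moreover have "int (card (I - Z)) = m - int (card Z)"
    using Z finite_index unfolding m_def by (simp add: card_Diff_subset card_mono of_nat_diff)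
  ultimately have total: "2 * m - 2 * int (card Z) \<le> (\<Sum>i\<in>I. excess i)"
    by simp
  have "card Z \<le> t + 2"
    using card_excess_eq_0_le[OF assms(3,4)] j unfolding Z_def by blast
  moreover have "2 * m - 4 - 4 * int t \<le> (m - 2 - 2 * int t) * excess j"
    using mult_left_mono[OF ge_2[OF j] s] by (simp add: algebra_simps)
  moreover have "(m - 2 - 2 * int t) * excess j + (\<Sum>i\<in>I. excess i) \<le> 2 * int t ^ 2"
    using excess_bound[of j] j unfolding m_def by simp
  ultimately show False
    using total m by linarith
qed

lemma excess_cases:
  assumes "t^2 + t + 2 \<le> card I" and "t^2 + 3 * t + 4 < 2 * card I"
  obtains "\<forall>i\<in>I. excess i = 0"
  | i0 where "card I = t^2 + t + 2" "i0 \<in> I" "excess i0 = -1" "\<forall>j\<in>I - {i0}. excess j = 1"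
proof -
  obtain i where i: "i \<in> I" "excess i \<le> 0"
    using ex_excess_nonpos[OF assms(1)] by blast
  then consider "excess i = 0" | "excess i < 0"
    by linarith
  then show ?thesis
  proof cases
    case 1
    then show ?thesis
      using that(1) all_excess_eq_0_if_excess_eq_0[OF assms i(1)] by blast
  next
    case 2
    then have "card I = t^2 + t + 2" "excess i = -1"
      using tight_if_excess_neg[OF assms i(1)] by auto
    moreover from this have "\<forall>j\<in>I - {i}. excess j = 1"
      using excess_eq_1_if_tight[OF _ assms(2) i(1)] by blast
    ultimately show ?thesis
      using that(2) i(1) by blast
  qed
qed

end

lemma tight_configuration_impossible:
  fixes F :: "'a set set"
  assumes "finite F" and "uniform_family k F" and "finite H"
    and "k + 1 = 2 * t" and "card F = t^2 + t + 2"
    and "\<And>y. card {B\<in>F. y \<in> sym_diff B H} \<le> t + 1"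
    and "B0 \<in> F" and "card (sym_diff B0 H) + 1 = t"
    and "\<And>C. C \<in> F - {B0} \<Longrightarrow> card (sym_diff C H) = t + 1"
    and "\<And>C. C \<in> F - {B0} \<Longrightarrow> sym_diff C H \<inter> sym_diff B0 H = {}"
  shows False
proof -
  define N where "N B = sym_diff B H" for B
  define c where "c B = card (N B \<inter> H)" for B
  have size: "k + 2 * c B = card (N B) + card H" if "B \<in> F" for B
  proof -
    have "sym_diff (N B) H = B"
      unfolding N_def by blast
    moreover have "finite B" "card B = k"
      using assms(2) that unfolding uniform_family_def by auto
    moreover have "finite (N B)"
      using \<open>finite B\<close> assms(3) unfolding N_def by blast
    ultimately show ?thesis
      using card_add_card_eq_card_sym_diff[of "N B" H] assms(3) unfolding c_def by simp
  qed
  \<comment> \<open>|B| = k fixes c B = |H - B|: every C other than B0 misses one heavy point more than B0\<close>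
  have card_H: "card H = t + 2 * c B0"
    using size[OF assms(7)] assms(4,8) unfolding N_def by linarith
  have c_other: "c C = c B0 + 1" if "C \<in> F - {B0}" for C
    using size[of C] that card_H assms(4) assms(9)[OF that] unfolding N_def by auto
  have "(t^2 + t + 1) * (c B0 + 1) = (\<Sum>C\<in>F - {B0}. c C)"
  proof -
    have "(\<Sum>C\<in>F - {B0}. c C) = (\<Sum>C\<in>F - {B0}. c B0 + 1)"
      using c_other by (rule sum.cong[OF refl])
    then show ?thesis
      using assms(1,5,7) by simp
  qed
  also have "\<dots> = (\<Sum>C\<in>F - {B0}. card (N C \<inter> (H - N B0)))"
  proof (rule sum.cong[OF refl])
    fix C
    assume "C \<in> F - {B0}"
    then have "N C \<inter> H = N C \<inter> (H - N B0)"
      using assms(10) unfolding N_def by blast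
    then show "c C = card (N C \<inter> (H - N B0))"
      unfolding c_def by simp
  qed
  also have "\<dots> = (\<Sum>y\<in>H - N B0. card {C\<in>F - {B0}. y \<in> N C})"
    using assms(1,3) by (intro sum_card_Int_eq_sum_card_mem) auto
  also have "\<dots> \<le> (\<Sum>y\<in>H - N B0. t + 1)"
  proof (rule sum_mono)
    fix y
    have "card {C\<in>F - {B0}. y \<in> N C} \<le> card {B\<in>F. y \<in> sym_diff B H}"
      using assms(1) unfolding N_def by (intro card_mono) auto
    then show "card {C\<in>F - {B0}. y \<in> N C} \<le> t + 1"
      using assms(6)[of y] by simp
  qed
  also have "\<dots> = (t + 1) * card (H - N B0)"
    by simp
  also have "card (H - N B0) = t + c B0"
    using assms(3) card_H card_Diff_subset_Int[of H "N B0"] unfolding c_def by (simp add: inf_commute)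
  finally have "(t^2 + t + 1) * (c B0 + 1) \<le> (t + 1) * (t + c B0)" .
  moreover have "(t + 1) * (t + c B0) < (t^2 + t + 1) * (c B0 + 1)"
    unfolding power2_eq_square distrib_left distrib_right by simp
  ultimately show False
    by linarith
qed

locale weak_delta_family =
  fixes F :: "'a set set" and k lam :: nat
  assumes finite_family: "finite F"
    and uniform: "uniform_family k F"
    and weak_delta: "weak_delta_system lam F"
begin

lemma finite_member: "B \<in> F \<Longrightarrow> finite B"
  using uniform unfolding uniform_family_def by blast

lemma card_member: "B \<in> F \<Longrightarrow> card B = k"
  using uniform unfolding uniform_family_def by blast

lemma card_Int_members: "\<lbrakk>B \<in> F; C \<in> F; B \<noteq> C\<rbrakk> \<Longrightarrow> card (B \<inter> C) = lam"
  using weak_delta unfolding weak_delta_system_def by blast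

lemma finite_Union_family: "finite (\<Union>F)"
  using finite_family finite_member by blast

lemma lam_le_k:
  assumes "B \<in> F" "C \<in> F" "B \<noteq> C"
  shows "lam \<le> k"
  using card_mono[OF finite_member[OF assms(1)], of "B \<inter> C"] card_Int_members[OF assms]
    card_member[OF assms(1)] by simp

lemma sum_sum_card_Int:
  assumes "lam \<le> k" "P \<subseteq> F" "Q \<subseteq> F"
  shows "(\<Sum>B\<in>P. \<Sum>C\<in>Q. card (C \<inter> B)) = card P * card Q * lam + card (P \<inter> Q) * (k - lam)"
proof -
  have "finite P" "finite Q"
    using assms(2,3) finite_family finite_subset by auto
  have "(\<Sum>C\<in>Q. card (C \<inter> B)) = card Q * lam + (if B \<in> Q then k - lam else 0)" if "B \<in> P" for B
  proof -
    have "(\<Sum>C\<in>Q. card (C \<inter> B)) = (\<Sum>C\<in>Q. lam + (if C = B then k - lam else 0))"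
    proof (rule sum.cong[OF refl])
      fix C
      assume "C \<in> Q"
      then show "card (C \<inter> B) = lam + (if C = B then k - lam else 0)"
        using that assms card_member card_Int_members[of C B] by auto
    qed
    then show ?thesis
      using \<open>finite Q\<close> by (simp add: sum.distrib)
  qed
  then have "(\<Sum>B\<in>P. \<Sum>C\<in>Q. card (C \<inter> B))
      = (\<Sum>B\<in>P. card Q * lam + (if B \<in> Q then k - lam else 0))"
    by (rule sum.cong[OF refl])
  also have "\<dots> = card P * card Q * lam + card (P \<inter> Q) * (k - lam)"
    using \<open>finite P\<close> by (simp add: sum.distrib sum.If_cases)
  finally show ?thesis .
qed

lemma sum_degree:
  assumes "P \<subseteq> F"
  shows "(\<Sum>y\<in>\<Union>F. degree P y) = card P * k"
proof -
  have "(\<Sum>y\<in>\<Union>F. degree P y) = (\<Sum>B\<in>P. card (B \<inter> \<Union>F))"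
    unfolding degree_def
    using sum_card_Int_eq_sum_card_mem[of P "\<Union>F" "\<lambda>B. B"] finite_subset[OF assms finite_family]
      finite_Union_family by simp
  also have "\<dots> = (\<Sum>B\<in>P. k)"
  proof (rule sum.cong[OF refl])
    fix B
    assume "B \<in> P"
    then have "B \<inter> \<Union>F = B" "card B = k"
      using assms card_member by auto
    then show "card (B \<inter> \<Union>F) = k"
      by simp
  qed
  finally show ?thesis
    by simp
qed

lemma sum_degree_mult_degree_eq:
  assumes "lam \<le> k" "P \<subseteq> F" "Q \<subseteq> F"
  shows "(\<Sum>y\<in>\<Union>F. degree P y * degree Q y) = card P * card Q * lam + card (P \<inter> Q) * (k - lam)"
  using sum_degree_mult_degree_eq_sum_card_Int[of P Q "\<Union>F"] sum_sum_card_Int[OF assms] assms(2,3)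
    finite_family finite_Union_family finite_subset by fastforce

lemma sum_degree_deviation:
  assumes "P \<subseteq> F" "Q \<subseteq> F"
  shows "(\<Sum>y\<in>\<Union>F. int (card Q) * int (degree P y) - int (card P) * int (degree Q y)) = 0"
proof -
  have "int (\<Sum>y\<in>\<Union>F. degree P y) = int (card P * k)" "int (\<Sum>y\<in>\<Union>F. degree Q y) = int (card Q * k)"
    using sum_degree[OF assms(1)] sum_degree[OF assms(2)] by simp_all
  then show ?thesis
    by (simp add: sum_subtractf flip: sum_distrib_left)
qed

lemma sum_square_degree_deviation:
  assumes "lam \<le> k" "P \<union> Q = F" "P \<inter> Q = {}"
  shows "(\<Sum>y\<in>\<Union>F. (int (card Q) * int (degree P y) - int (card P) * int (degree Q y))\<^sup>2)
    = int (card P) * int (card Q) * int (k - lam) * int (card F)"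
proof -
  define a b where "a = int (card P)" and "b = int (card Q)"
  define \<alpha> \<beta> where "\<alpha> y = int (degree P y)" and "\<beta> y = int (degree Q y)" for y
  have "P \<subseteq> F" "Q \<subseteq> F"
    using assms(2) by auto
  have m: "int (card F) = a + b"
    using assms(2,3) finite_family card_Un_disjoint[of P Q] unfolding a_def b_def by fastforce
  have int_sum: "(\<Sum>y\<in>\<Union>F. int (degree R y) * int (degree S y))
      = int (card R) * int (card S) * int lam + int (card (R \<inter> S)) * int (k - lam)"
    if "R \<subseteq> F" "S \<subseteq> F" for R S
    using arg_cong[OF sum_degree_mult_degree_eq[OF assms(1) that], of int] by simp
  have "(\<Sum>y\<in>\<Union>F. (b * \<alpha> y - a * \<beta> y)\<^sup>2)
      = b * b * (\<Sum>y\<in>\<Union>F. \<alpha> y * \<alpha> y) - 2 * a * b * (\<Sum>y\<in>\<Union>F. \<alpha> y * \<beta> y)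
        + a * a * (\<Sum>y\<in>\<Union>F. \<beta> y * \<beta> y)"
    by (simp add: power2_eq_square algebra_simps sum.distrib sum_subtractf sum_distrib_left)
  also have "\<dots> = a * b * int (k - lam) * (a + b)"
    using assms(3) int_sum[OF \<open>P \<subseteq> F\<close> \<open>P \<subseteq> F\<close>] int_sum[OF \<open>P \<subseteq> F\<close> \<open>Q \<subseteq> F\<close>]
      int_sum[OF \<open>Q \<subseteq> F\<close> \<open>Q \<subseteq> F\<close>]
    unfolding a_def b_def \<alpha>_def \<beta>_def by (simp add: algebra_simps)
  finally show ?thesis
    unfolding a_def b_def \<alpha>_def \<beta>_def m[folded a_def b_def] .
qed

lemma degree_mult_less:
  assumes "0 < degree F x" "degree F x < card F"
  shows "degree F x * (card F - degree F x) < (k - lam) * card F"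
proof -
  define P where "P = {B\<in>F. x \<in> B}"
  define Q where "Q = F - P"
  define f where "f y = int (card Q) * int (degree P y) - int (card P) * int (degree Q y)" for y
  have PQ: "P \<union> Q = F" "P \<inter> Q = {}" "P \<subseteq> F" "Q \<subseteq> F"
    unfolding P_def Q_def by auto
  have a: "card P = degree F x"
    unfolding P_def degree_def ..
  have b: "card Q = card F - degree F x"
    using finite_family a unfolding Q_def P_def by (simp add: card_Diff_subset)
  have "P \<noteq> {}" "Q \<noteq> {}"
    using assms a b by auto
  then obtain B C where "B \<in> P" "C \<in> Q"
    by blast
  then have "lam \<le> k" "x \<in> \<Union>F"
    using PQ lam_le_k[of B C] unfolding P_def by blast+
  have x_in: "{B\<in>P. x \<in> B} = P" "{B\<in>Q. x \<in> B} = {}"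
    unfolding P_def Q_def by blast+
  have "degree P x = card P" "degree Q x = 0"
    unfolding degree_def x_in by simp_all
  then have fx: "f x = int (card P) * int (card Q)"
    unfolding f_def by simp
  \<comment> \<open>f has mean zero, so its value |P| |Q| at x cannot carry all of its square sum |P| |Q| (k - lam) |F|\<close>
  have "(f x)\<^sup>2 < (\<Sum>y\<in>\<Union>F. (f y)\<^sup>2)"
    using finite_Union_family \<open>x \<in> \<Union>F\<close> sum_degree_deviation[OF PQ(3,4)] fx assms a b
    unfolding f_def by (intro square_less_sum_squares_if_sum_eq_0) auto
  also have "\<dots> = int (card P) * int (card Q) * (int (k - lam) * int (card F))"
    unfolding f_def sum_square_degree_deviation[OF \<open>lam \<le> k\<close> PQ(1,2)] by simp
  finally have "int (card P) * int (card Q) < int (k - lam) * int (card F)"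
    unfolding fx power2_eq_square using assms a b by (simp add: mult_less_cancel_left_pos)
  then show ?thesis
    unfolding a b by (metis of_nat_less_iff of_nat_mult)
qed

lemma degree_low_or_high:
  assumes "(k - lam + 2)\<^sup>2 \<le> 2 * card F"
  shows "degree F y \<le> k - lam + 1 \<or> card F - degree F y \<le> k - lam + 1"
proof -
  have "degree F y \<le> card F"
    unfolding degree_def using finite_family by (simp add: card_mono)
  moreover have ?thesis if "0 < degree F y" "degree F y < card F"
    using degree_mult_less[OF that] assms \<open>degree F y \<le> card F\<close>
      le_or_le_if_mult_less[of "k - lam" "degree F y" "card F - degree F y"] by simp
  ultimately show ?thesis
    by (cases "degree F y = 0 \<or> degree F y = card F") auto
qed

definition heavy :: "'a set" where
  "heavy = {y. k - lam + 1 < degree F y}"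

lemma finite_heavy: "finite heavy"
proof (rule finite_subset[OF _ finite_Union_family])
  show "heavy \<subseteq> \<Union>F"
  proof
    fix y
    assume "y \<in> heavy"
    then have "0 < card {B\<in>F. y \<in> B}"
      unfolding heavy_def degree_def by simp
    then have "{B\<in>F. y \<in> B} \<noteq> {}"
      by (simp add: card_gt_0_iff)
    then show "y \<in> \<Union>F"
      by blast
  qed
qed

lemma card_sym_diff_heavy_containing_le:
  assumes "(k - lam + 2)\<^sup>2 \<le> 2 * card F"
  shows "card {B\<in>F. y \<in> sym_diff B heavy} \<le> k - lam + 1"
proof (cases "y \<in> heavy")
  case True
  then have "{B\<in>F. y \<in> sym_diff B heavy} = F - {B\<in>F. y \<in> B}"
    by auto
  then have "card {B\<in>F. y \<in> sym_diff B heavy} = card F - degree F y"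
    unfolding degree_def using finite_family by (simp add: card_Diff_subset)
  then show ?thesis
    using True degree_low_or_high[OF assms, of y] unfolding heavy_def by auto
next
  case False
  then have "{B\<in>F. y \<in> sym_diff B heavy} = {B\<in>F. y \<in> B}"
    by auto
  then show ?thesis
    using False unfolding heavy_def degree_def by simp
qed

lemma equidistant_family_sym_diff:
  assumes "lam \<le> k" "finite H" "\<And>y. card {B\<in>F. y \<in> sym_diff B H} \<le> k - lam + 1"
  shows "equidistant_family F (\<lambda>B. sym_diff B H) (k - lam)"
proof
  show "finite F"
    by (rule finite_family)
  show "finite (sym_diff B H)" if "B \<in> F" for B
    using finite_member[OF that] assms(2) by blast
  show "card (sym_diff (sym_diff B H) (sym_diff C H)) = 2 * (k - lam)"
    if "B \<in> F" "C \<in> F" "B \<noteq> C" for B C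
  proof -
    have "sym_diff (sym_diff B H) (sym_diff C H) = sym_diff B C"
      by blast
    then show ?thesis
      using card_add_card_eq_card_sym_diff[OF finite_member[OF that(1)] finite_member[OF that(2)]]
        card_member that card_Int_members[OF that] assms(1) by simp
  qed
  show "card {B\<in>F. y \<in> sym_diff B H} \<le> k - lam + 1" for y
    by (rule assms(3))
qed

lemma card_Diff_add_card_Diff_if_sym_diff_disjoint:
  assumes "finite H" "B \<in> F" "C \<in> F" "B \<noteq> C" "sym_diff B H \<inter> sym_diff C H = {}"
  shows "card (H - B) + card (H - C) + lam = card H"
proof -
  have "B \<inter> C = H - ((H - B) \<union> (H - C))" "(H - B) \<inter> (H - C) = {}"
    using assms(5) by blast+
  moreover have "card (H - ((H - B) \<union> (H - C))) + card ((H - B) \<union> (H - C)) = card H"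
    using assms(1) card_Int_Diff[of H "(H - B) \<union> (H - C)"] by (simp add: Int_absorb1 add.commute)
  ultimately show ?thesis
    using assms(1) card_Int_members[OF assms(2-4)] card_Un_disjoint[of "H - B" "H - C"] by simp
qed

lemma strong_delta_system_if_sym_diff_disjoint:
  assumes "finite H" and "lam + 2 < card F"
    and disj: "\<And>B C. \<lbrakk>B \<in> F; C \<in> F; B \<noteq> C\<rbrakk> \<Longrightarrow> sym_diff B H \<inter> sym_diff C H = {}"
  shows "strong_delta_system F"
proof -
  have gaps: "card (H - B) + card (H - C) + lam = card H" if "B \<in> F" "C \<in> F" "B \<noteq> C" for B C
    using card_Diff_add_card_Diff_if_sym_diff_disjoint[OF assms(1) that disj[OF that]] .
  have "F \<noteq> {}"
    using assms(2) by auto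
  then obtain B0 where B0: "B0 \<in> F"
    by blast
  have gap_const: "card (H - B) = card (H - B0)" if "B \<in> F" for B
  proof (cases "B = B0")
    case False
    have "card {B, B0} \<le> 2"
      by (simp add: card_insert_if)
    then have "0 < card (F - {B, B0})"
      using assms(2) finite_family that B0 by (simp add: card_Diff_subset)
    then obtain D where "D \<in> F" "D \<noteq> B" "D \<noteq> B0"
      by (auto simp: card_gt_0_iff)
    then show ?thesis
      using gaps[of B D] gaps[of B0 D] that B0 by simp
  qed simp
  show ?thesis
  proof (cases "card (H - B0) = 0")
    case True
    have "H \<subseteq> B" if "B \<in> F" for B
    proof -
      have "card (H - B) = 0"
        using gap_const[OF that] True by linarith
      then show ?thesis
        using assms(1) by simp
    qed
    moreover have "B \<inter> C \<subseteq> H" if "B \<in> F" "C \<in> F" "B \<noteq> C" for B C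
      using disj[OF that] by blast
    ultimately have "\<forall>B\<in>F. \<forall>C\<in>F. B \<noteq> C \<longrightarrow> B \<inter> C = H"
      by blast
    then show ?thesis
      unfolding strong_delta_system_def by (rule exI)
  next
    case False
    have "0 < card (F - {B0})"
      using assms(2) finite_family B0 by (simp add: card_Diff_singleton)
    then obtain B1 where B1: "B1 \<in> F" "B1 \<noteq> B0"
      by (auto simp: card_gt_0_iff)
    have "(\<Sum>B\<in>F. card (H - B)) = (\<Sum>B\<in>F. card (H - B0))"
      using gap_const by (rule sum.cong[OF refl])
    then have "card F * card (H - B0) = card (\<Union>B\<in>F. H - B)"
      using finite_family assms(1) disj by (subst card_UN_disjoint) auto
    also have "\<dots> \<le> card H"
      using assms(1) by (intro card_mono) auto
    also have "\<dots> = 2 * card (H - B0) + lam"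
      using gaps[OF B0 B1(1) B1(2)[symmetric]] gap_const[OF B1(1)] by simp
    finally have "card F * card (H - B0) \<le> 2 * card (H - B0) + lam" .
    moreover have "lam * card (H - B0) + 3 * card (H - B0) \<le> card F * card (H - B0)"
      using mult_right_mono[of "lam + 3" "card F" "card (H - B0)"] assms(2) by (simp add: algebra_simps)
    moreover have "lam \<le> lam * card (H - B0)"
      using False by simp
    ultimately show ?thesis
      using False by linarith
  qed
qed

lemma card_family_le_1_if_lam_eq_k:
  assumes "lam = k"
  shows "card F \<le> 1"
proof -
  have "B = C" if "B \<in> F" "C \<in> F" for B C
  proof (rule ccontr)
    assume "B \<noteq> C"
    then have "card (B \<inter> C) = card B" "card (B \<inter> C) = card C"
      using card_Int_members card_member that assms by auto
    then have "B \<inter> C = B" "B \<inter> C = C"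
      using finite_member that by (metis card_subset_eq inf_le1 inf_le2)+
    with \<open>B \<noteq> C\<close> show False
      by simp
  qed
  then show ?thesis
    using card_le_Suc0_iff_eq[OF finite_family] by simp
qed

lemma strong_delta_system_if_lam_eq_0:
  assumes "lam = 0"
  shows "strong_delta_system F"
proof -
  have "B \<inter> C = {}" if "B \<in> F" "C \<in> F" "B \<noteq> C" for B C
    using card_Int_members[OF that] finite_member that assms by simp
  then show ?thesis
    unfolding strong_delta_system_def by blast
qed

theorem strong_delta_system_if_card_large:
  assumes "lam + 2 < card F" and "(k - lam + 2)\<^sup>2 \<le> 2 * card F"
    and "(k - lam)\<^sup>2 + (k - lam) + 2 \<le> card F"
    and "k + 1 = 2 * (k - lam) \<or> (k - lam)\<^sup>2 + (k - lam) + 2 < card F"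
  shows "strong_delta_system F"
proof -
  have "\<not> card F \<le> Suc 0"
    using assms(1) by simp
  then obtain B C where "B \<in> F" "C \<in> F" "B \<noteq> C"
    using card_le_Suc0_iff_eq[OF finite_family] by blast
  then have "lam \<le> k"
    by (rule lam_le_k)
  interpret N: equidistant_family F "\<lambda>B. sym_diff B heavy" "k - lam"
    by (rule equidistant_family_sym_diff[OF \<open>lam \<le> k\<close> finite_heavy
          card_sym_diff_heavy_containing_le[OF assms(2)]])
  have "(k - lam)\<^sup>2 + 3 * (k - lam) + 4 < 2 * card F"
    using assms(1,2) by (cases "k - lam") (auto simp: power2_eq_square)
  from N.excess_cases[OF assms(3) this] show ?thesis
  proof cases
    case 1
    then show ?thesis
      using N.disjoint_if_excess_add_eq_0
      by (intro strong_delta_system_if_sym_diff_disjoint[OF finite_heavy assms(1)]) auto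
  next
    case (2 B0)
    have "k + 1 = 2 * (k - lam)"
      using 2(1) assms(4) by linarith
    moreover have "card (sym_diff B0 heavy) + 1 = k - lam"
      using 2(3) unfolding N.excess_def by linarith
    moreover have "card (sym_diff C heavy) = k - lam + 1" if "C \<in> F - {B0}" for C
    proof -
      have "int (card (sym_diff C heavy)) - int (k - lam) = 1"
        using 2(4) that unfolding N.excess_def by blast
      then show ?thesis
        by linarith
    qed
    moreover have "sym_diff C heavy \<inter> sym_diff B0 heavy = {}" if "C \<in> F - {B0}" for C
      using N.disjoint_if_excess_add_eq_0[of C B0] 2 that by auto
    ultimately show ?thesis
      using tight_configuration_impossible[OF finite_family uniform finite_heavy _ 2(1)
          card_sym_diff_heavy_containing_le[OF assms(2)] 2(2)] by blast
  qed
qed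

corollary strong_delta_system_if_lam_eq_Suc_half:
  assumes "k = 2 * \<mu> + 1" "lam = \<mu> + 1" "\<mu>\<^sup>2 + \<mu> + 3 \<le> card F"
  shows "strong_delta_system F"
proof (cases "\<mu> = 0")
  case True
  then show ?thesis
    using card_family_le_1_if_lam_eq_k assms by simp
next
  case False
  have "1 \<le> \<mu> * \<mu>" "2 * \<mu> \<le> \<mu> * \<mu> + 1"
    using False by (simp, cases \<mu>) (simp_all add: algebra_simps)
  moreover have "(\<mu> + 2)\<^sup>2 = \<mu> * \<mu> + 4 * \<mu> + 4" "\<mu>\<^sup>2 = \<mu> * \<mu>"
    by (simp_all add: power2_eq_square algebra_simps)
  ultimately show ?thesis
    using assms by (intro strong_delta_system_if_card_large) simp_all
qed

corollary strong_delta_system_if_lam_eq_half: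
  assumes "k = 2 * \<mu> + 1" "lam = \<mu>" "(\<mu> + 1)\<^sup>2 + \<mu> + 3 \<le> card F"
  shows "strong_delta_system F"
proof (cases "\<mu> = 0")
  case True
  then show ?thesis
    using strong_delta_system_if_lam_eq_0 assms by simp
next
  case False
  have "1 \<le> \<mu> * \<mu>"
    using False by simp
  moreover have "(\<mu> + 1 + 2)\<^sup>2 = \<mu> * \<mu> + 6 * \<mu> + 9" "(\<mu> + 1)\<^sup>2 = \<mu> * \<mu> + 2 * \<mu> + 1"
    by (simp_all add: power2_eq_square algebra_simps)
  ultimately have "(\<mu> + 1 + 2)\<^sup>2 \<le> 2 * card F"
    using assms(3) by linarith
  then show ?thesis
    using assms by (intro strong_delta_system_if_card_large) simp_all
qed

end

theorem lemma7:
  fixes \<mu> :: nat and F :: "'a set set"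
  assumes "finite F" and "uniform_family (2 * \<mu> + 1) F"
  shows "(weak_delta_system (\<mu> + 1) F \<and> card F \<ge> \<mu>^2 + \<mu> + 3 \<longrightarrow> strong_delta_system F)
       \<and> (weak_delta_system \<mu> F \<and> card F \<ge> (\<mu> + 1)^2 + \<mu> + 3 \<longrightarrow> strong_delta_system F)"
  using weak_delta_family.strong_delta_system_if_lam_eq_Suc_half[of F "2 * \<mu> + 1" "\<mu> + 1" \<mu>]
    weak_delta_family.strong_delta_system_if_lam_eq_half[of F "2 * \<mu> + 1" \<mu> \<mu>] assms
  unfolding weak_delta_family_def by blast

end
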